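(* Let $m$ be a finite positive measure on a measurable space $(E,\mathcal{B})$ and $(P_t)_{t\ge0}$ a strongly continuous semigroup of Markovian operators on $L^p(m)$ for some $p\ge1$, with resolvent $R_\alpha f=\int_0^\infty e^{-\alpha t}P_tf\,dt$. Assume $R_\alpha$ is defined on $L^p(m)$ for all $\alpha>0$ and that $(\alpha R_\alpha)_{\alpha>0}$ is uniformly bounded in operator norm on $L^p(m)$. Then $m$ is resolvent almost invariant, and hence there exists a nonzero positive finite invariant measure $\nu=\rho\cdot m$ for $(P_t)_{t\ge0}$. Moreover, if $p>1$ then $\rho$ can be chosen in $L^q_+(m)$, where $\frac1p+\frac1q=1$.
   Context: A Markovian operator is a positivity preserving linear operator $T$ with $T1=1$. $m$ is resolvent almost invariant if there exist $\delta\in[0,1)$ and $\phi:\mathcal{B}\to[0,\infty)$ with $\lim_{m(A)\to0}\phi(A)=0$ such that $m(\alpha R_\alpha1_A)\le\phi(A)+\delta m(E)$ for all $A\in\mathcal{B}$ and $\alpha>0$. A measure $\nu$ is invariant if $\int P_tf\,d\nu=\int f\,d\nu$ for all $t>0$ and $f\in L^\infty(m)$. *)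

theory Defs
  imports "HOL-Analysis.Analysis"
begin

text \<open>Functions are representatives of L^p classes; all identities hold almost everywhere.\<close>

definition Lp :: "'a measure \<Rightarrow> real \<Rightarrow> ('a \<Rightarrow> real) set" where
  "Lp M p = {f. f \<in> borel_measurable M \<and> integrable M (\<lambda>x. \<bar>f x\<bar> powr p)}"

definition Lp_norm :: "'a measure \<Rightarrow> real \<Rightarrow> ('a \<Rightarrow> real) \<Rightarrow> real" where
  "Lp_norm M p f = (\<integral>x. \<bar>f x\<bar> powr p \<partial>M) powr (1 / p)"

definition Linfty :: "'a measure \<Rightarrow> ('a \<Rightarrow> real) set" where
  "Linfty M = {f. f \<in> borel_measurable M \<and> (\<exists>C. AE x in M. \<bar>f x\<bar> \<le> C)}"

definition markovian_op :: "'a measure \<Rightarrow> real \<Rightarrow> (('a \<Rightarrow> real) \<Rightarrow> ('a \<Rightarrow> real)) \<Rightarrow> bool" where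
  "markovian_op M p T \<longleftrightarrow>
     (\<forall>f\<in>Lp M p. T f \<in> Lp M p) \<and>
     (\<forall>f\<in>Lp M p. \<forall>g\<in>Lp M p. (AE x in M. f x = g x) \<longrightarrow> (AE x in M. T f x = T g x)) \<and>
     (\<forall>f\<in>Lp M p. \<forall>g\<in>Lp M p. \<forall>a b. AE x in M. T (\<lambda>y. a * f y + b * g y) x = a * T f x + b * T g x) \<and>
     (\<exists>C. \<forall>f\<in>Lp M p. Lp_norm M p (T f) \<le> C * Lp_norm M p f) \<and>
     (\<forall>f\<in>Lp M p. (AE x in M. 0 \<le> f x) \<longrightarrow> (AE x in M. 0 \<le> T f x)) \<and>
     (AE x in M. T (\<lambda>_. 1) x = 1)"

definition markov_C0_semigroup :: "'a measure \<Rightarrow> real \<Rightarrow> (real \<Rightarrow> ('a \<Rightarrow> real) \<Rightarrow> ('a \<Rightarrow> real)) \<Rightarrow> bool" where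
  "markov_C0_semigroup M p P \<longleftrightarrow>
     (\<forall>t\<ge>0. markovian_op M p (P t)) \<and>
     (\<forall>f\<in>Lp M p. AE x in M. P 0 f x = f x) \<and>
     (\<forall>s\<ge>0. \<forall>t\<ge>0. \<forall>f\<in>Lp M p. AE x in M. P (s + t) f x = P s (P t f) x) \<and>
     (\<forall>f\<in>Lp M p. ((\<lambda>t. Lp_norm M p (\<lambda>x. P t f x - f x)) \<longlongrightarrow> 0) (at_right 0))"

text \<open>g represents the L^p-valued integral of t |-> exp(-alpha t) P_t f over [0,T],
  characterised by duality against bounded measurable functions.\<close>
definition partial_resolvent ::
  "'a measure \<Rightarrow> real \<Rightarrow> (real \<Rightarrow> ('a \<Rightarrow> real) \<Rightarrow> ('a \<Rightarrow> real)) \<Rightarrow> real \<Rightarrow> real \<Rightarrow> ('a \<Rightarrow> real) \<Rightarrow> ('a \<Rightarrow> real) \<Rightarrow> bool" where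
  "partial_resolvent M p P \<alpha> T f g \<longleftrightarrow> g \<in> Lp M p \<and>
     (\<forall>h\<in>Linfty M.
        set_integrable lborel {0..T} (\<lambda>t. exp (- \<alpha> * t) * (\<integral>x. P t f x * h x \<partial>M)) \<and>
        (\<integral>x. g x * h x \<partial>M) = (LINT t:{0..T}|lborel. exp (- \<alpha> * t) * (\<integral>x. P t f x * h x \<partial>M)))"

text \<open>r = R_alpha f = int_0^infty exp(-alpha t) P_t f dt, as an improper integral converging in L^p.\<close>
definition is_resolvent ::
  "'a measure \<Rightarrow> real \<Rightarrow> (real \<Rightarrow> ('a \<Rightarrow> real) \<Rightarrow> ('a \<Rightarrow> real)) \<Rightarrow> real \<Rightarrow> ('a \<Rightarrow> real) \<Rightarrow> ('a \<Rightarrow> real) \<Rightarrow> bool" where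
  "is_resolvent M p P \<alpha> f r \<longleftrightarrow> r \<in> Lp M p \<and>
     (\<forall>\<epsilon>>0. \<exists>T0. \<forall>T\<ge>T0. \<exists>g. partial_resolvent M p P \<alpha> T f g \<and> Lp_norm M p (\<lambda>x. r x - g x) < \<epsilon>)"

definition resolvent_almost_invariant ::
  "'a measure \<Rightarrow> (real \<Rightarrow> ('a \<Rightarrow> real) \<Rightarrow> ('a \<Rightarrow> real)) \<Rightarrow> bool" where
  "resolvent_almost_invariant M R \<longleftrightarrow>
     (\<exists>\<delta> (\<phi> :: 'a set \<Rightarrow> real). 0 \<le> \<delta> \<and> \<delta> < 1 \<and> (\<forall>A\<in>sets M. 0 \<le> \<phi> A) \<and>
        (\<forall>\<epsilon>>0. \<exists>\<eta>>0. \<forall>A\<in>sets M. measure M A < \<eta> \<longrightarrow> \<phi> A < \<epsilon>) \<and>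
        (\<forall>A\<in>sets M. \<forall>\<alpha>>0. (\<integral>x. \<alpha> * R \<alpha> (indicator A) x \<partial>M) \<le> \<phi> A + \<delta> * measure M (space M)))"

definition invariant_measure ::
  "'a measure \<Rightarrow> (real \<Rightarrow> ('a \<Rightarrow> real) \<Rightarrow> ('a \<Rightarrow> real)) \<Rightarrow> 'a measure \<Rightarrow> bool" where
  "invariant_measure M P \<nu> \<longleftrightarrow>
     (\<forall>t>0. \<forall>f\<in>Linfty M. (\<integral>x. P t f x \<partial>\<nu>) = (\<integral>x. f x \<partial>\<nu>))"

end

theory Submission
  imports Defs "HOL-Real_Asymp.Real_Asymp"
begin

text \<open>The functionals \<open>f \<mapsto> \<integral> \<alpha> R\<^sub>\<alpha> f dm\<close> are positive and linear, take the value
  \<open>m(E)\<close> at \<open>1\<close> and, by Hoelder's inequality and the uniform bound on \<open>\<alpha> R\<^sub>\<alpha>\<close>, are dominated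
  by \<open>C \<parallel>f\<parallel>\<^sub>p\<close> uniformly in \<open>\<alpha>\<close>. On indicators this domination is resolvent almost
  invariance, with \<open>\<delta> = 0\<close> and \<open>\<phi>(A) = C m(A)\<^bsup>1/p\<^esup>\<close>.

  By Tychonoff's theorem these functionals have a cluster point \<open>L\<close> on \<open>L\<^sup>\<infinity>\<close> as
  \<open>\<alpha> \<rightarrow> 0\<^sup>+\<close>. The resolvent identity gives \<open>\<integral> \<alpha> R\<^sub>\<alpha> (P\<^sub>s f) dm - \<integral> \<alpha> R\<^sub>\<alpha> f dm \<rightarrow> 0\<close>, so
  \<open>L\<close> is invariant. The domination persists in the limit, which makes \<open>A \<mapsto> L 1\<^sub>A\<close> a finite
  measure absolutely continuous with respect to \<open>m\<close>; it represents \<open>L\<close> on \<open>L\<^sup>\<infinity>\<close>, and its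
  Radon-Nikodym density \<open>\<rho>\<close> is the invariant density. Testing the domination against
  truncations of \<open>\<rho>\<^bsup>q-1\<^esup>\<close> shows \<open>\<rho> \<in> L\<^sup>q\<close>.\<close>

section \<open>Elementary facts about \<open>L\<^sup>p\<close> over a finite measure\<close>

lemma Youngs_inequality_powr:
  fixes y t p :: real
  assumes "y \<ge> 0" "p \<ge> 1" "t > 0"
  shows "y \<le> y powr p / (t powr (p - 1) * p) + t * (1 - 1/p)"
proof -
  have Young: "z \<le> z powr p / p + (1 - 1/p)" if "z \<ge> 0" for z :: real
  proof (cases "z = 0")
    case True
    have "1 / p \<le> 1" using assms by simp
    with True show ?thesis by simp
  next
    case False
    have "(z powr p) powr (1/p) * 1 powr (1 - 1/p) \<le> (1/p) * z powr p + (1 - 1/p) * 1"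
      using assms that False by (intro Youngs_inequality_0) (auto simp: field_simps)
    moreover have "(z powr p) powr (1/p) = z" using assms that by (simp add: powr_powr)
    ultimately show ?thesis by simp
  qed
  have t_powr: "t powr p = t * t powr (p - 1)"
    using powr_add[of t 1 "p - 1"] assms by simp
  have "y \<le> t * ((y/t) powr p / p + (1 - 1/p))"
    using Young[of "y/t"] assms by (simp add: field_simps)
  also have "\<dots> = y powr p / (t powr (p - 1) * p) + t * (1 - 1/p)"
    using assms by (simp add: powr_divide t_powr field_simps)
  finally show ?thesis .
qed

lemma abs_add_powr_le:
  fixes u v p :: real
  assumes "p \<ge> 0"
  shows "\<bar>u + v\<bar> powr p \<le> 2 powr p * (\<bar>u\<bar> powr p + \<bar>v\<bar> powr p)"
proof -
  define w where "w = max \<bar>u\<bar> \<bar>v\<bar>"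
  have "\<bar>u + v\<bar> powr p \<le> (2 * w) powr p"
    unfolding w_def using assms by (intro powr_mono2) auto
  also have "\<dots> = 2 powr p * w powr p" unfolding w_def by (simp add: powr_mult)
  also have "w powr p \<le> \<bar>u\<bar> powr p + \<bar>v\<bar> powr p"
    unfolding w_def by (simp add: max_def)
  finally show ?thesis by (simp add: mult_left_mono)
qed

lemma Lp_norm_nonneg: "Lp_norm M p f \<ge> 0"
  unfolding Lp_norm_def by simp

lemma Lp_norm_eq_0_AE:
  assumes "AE x in M. f x = 0"
  shows "Lp_norm M p f = 0"
proof -
  have "AE x in M. \<bar>f x\<bar> powr p = 0" using assms by eventually_elim simp
  then show ?thesis unfolding Lp_norm_def by (simp add: integral_eq_zero_AE)
qed

lemma Linfty_const: "(\<lambda>_. c) \<in> Linfty M"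
  unfolding Linfty_def by auto

lemma Linfty_indicator: "A \<in> sets M \<Longrightarrow> (indicator A :: _ \<Rightarrow> real) \<in> Linfty M"
  unfolding Linfty_def by (auto intro!: exI[of _ 1] split: split_indicator)

lemma Linfty_lincomb:
  assumes "f \<in> Linfty M" "g \<in> Linfty M"
  shows "(\<lambda>x. a * f x + b * g x) \<in> Linfty M"
proof -
  obtain C D where C: "AE x in M. \<bar>f x\<bar> \<le> C" and D: "AE x in M. \<bar>g x\<bar> \<le> D"
    and meas: "f \<in> borel_measurable M" "g \<in> borel_measurable M"
    using assms by (auto simp: Linfty_def)
  have "AE x in M. \<bar>a * f x + b * g x\<bar> \<le> \<bar>a\<bar> * C + \<bar>b\<bar> * D"
    using C D
  proof eventually_elim
    case (elim x)
    have "\<bar>a * f x + b * g x\<bar> \<le> \<bar>a\<bar> * \<bar>f x\<bar> + \<bar>b\<bar> * \<bar>g x\<bar>"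
      by (simp add: abs_mult abs_triangle_ineq[THEN order_trans])
    also have "\<dots> \<le> \<bar>a\<bar> * C + \<bar>b\<bar> * D" using elim by (intro add_mono mult_left_mono) auto
    finally show ?case .
  qed
  with meas show ?thesis unfolding Linfty_def by auto
qed

lemma Linfty_sum:
  "finite S \<Longrightarrow> (\<And>k. k \<in> S \<Longrightarrow> h k \<in> Linfty M) \<Longrightarrow> (\<lambda>x. \<Sum>k\<in>S. c k * h k x) \<in> Linfty M"
proof (induction S rule: finite_induct)
  case (insert k S)
  then have "(\<lambda>x. c k * h k x + 1 * (\<Sum>k\<in>S. c k * h k x)) \<in> Linfty M"
    by (intro Linfty_lincomb) auto
  with insert show ?case by simp
qed (simp add: Linfty_const)

context finite_measure
begin

lemma Lp_integrable:
  assumes "f \<in> Lp M p" "p \<ge> 1"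
  shows "integrable M f"
proof -
  have int: "integrable M (\<lambda>x. 1 + \<bar>f x\<bar> powr p)" and meas: "f \<in> borel_measurable M"
    using assms by (auto simp: Lp_def)
  have "\<bar>f x\<bar> \<le> 1 + \<bar>f x\<bar> powr p" for x
  proof (cases "\<bar>f x\<bar> \<ge> 1")
    case True
    then have "\<bar>f x\<bar> powr 1 \<le> \<bar>f x\<bar> powr p" using assms by (intro powr_mono) auto
    then show ?thesis by simp
  qed (use powr_ge_zero[of "\<bar>f x\<bar>" p] in linarith)
  then show ?thesis
    by (intro Bochner_Integration.integrable_bound[OF int meas] AE_I2) simp
qed

lemma Lp_add:
  assumes "f \<in> Lp M p" "g \<in> Lp M p" "p \<ge> 0"
  shows "(\<lambda>x. f x + g x) \<in> Lp M p"
proof -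
  have int: "integrable M (\<lambda>x. 2 powr p * (\<bar>f x\<bar> powr p + \<bar>g x\<bar> powr p))"
    using assms unfolding Lp_def by (intro integrable_mult_right Bochner_Integration.integrable_add) auto
  have meas: "(\<lambda>x. f x + g x) \<in> borel_measurable M" using assms by (auto simp: Lp_def)
  have "integrable M (\<lambda>x. \<bar>f x + g x\<bar> powr p)"
    by (intro Bochner_Integration.integrable_bound[OF int] AE_I2)
       (use meas abs_add_powr_le[OF assms(3)] in auto)
  with meas show ?thesis unfolding Lp_def by blast
qed

lemma Lp_cmult:
  assumes "f \<in> Lp M p"
  shows "(\<lambda>x. a * f x) \<in> Lp M p"
proof -
  have "integrable M (\<lambda>x. \<bar>a\<bar> powr p * \<bar>f x\<bar> powr p)"
    using assms unfolding Lp_def by (intro integrable_mult_right) blast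
  then show ?thesis using assms unfolding Lp_def by (auto simp: abs_mult powr_mult)
qed

lemma Lp_lincomb:
  assumes "f \<in> Lp M p" "g \<in> Lp M p" "p \<ge> 0"
  shows "(\<lambda>x. a * f x + b * g x) \<in> Lp M p"
  using Lp_add[OF Lp_cmult[OF assms(1)] Lp_cmult[OF assms(2)] assms(3)] .

lemma Lp_diff:
  assumes "f \<in> Lp M p" "g \<in> Lp M p" "p \<ge> 0"
  shows "(\<lambda>x. f x - g x) \<in> Lp M p"
  using Lp_lincomb[OF assms, of 1 "-1"] by simp

lemma Linfty_Lp:
  assumes "f \<in> Linfty M" "p \<ge> 0"
  shows "f \<in> Lp M p"
proof -
  obtain C where C: "AE x in M. \<bar>f x\<bar> \<le> C" and meas: "f \<in> borel_measurable M"
    using assms by (auto simp: Linfty_def)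
  have "AE x in M. norm (\<bar>f x\<bar> powr p) \<le> \<bar>C\<bar> powr p"
    using C by eventually_elim (use assms in \<open>auto intro!: powr_mono2\<close>)
  with meas show ?thesis unfolding Lp_def by (auto intro!: integrable_const_bound)
qed

lemma Lp_norm_indicator:
  assumes "A \<in> sets M"
  shows "Lp_norm M p (indicator A) = measure M A powr (1/p)"
proof -
  have "(\<lambda>x. \<bar>indicator A x :: real\<bar> powr p) = indicator A"
    by (auto simp: indicator_def)
  with assms show ?thesis unfolding Lp_norm_def by simp
qed

text \<open>Hoelder's inequality against \<open>1\<close>, via Young's inequality with the optimal scale \<open>t\<close>.\<close>

lemma integral_abs_le_Lp_norm:
  assumes "u \<in> Lp M p" "p \<ge> 1"
  shows "(\<integral>x. \<bar>u x\<bar> \<partial>M) \<le> measure M (space M) powr (1 - 1/p) * Lp_norm M p u"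
proof -
  define m where "m = measure M (space M)"
  define N where "N = (\<integral>x. \<bar>u x\<bar> powr p \<partial>M)"
  have int: "integrable M (\<lambda>x. \<bar>u x\<bar> powr p)" using assms by (auto simp: Lp_def)
  have "N \<ge> 0" unfolding N_def by (intro integral_nonneg_AE) auto
  consider "N = 0" | "N > 0" "m > 0" | "m = 0"
    using \<open>N \<ge> 0\<close> measure_nonneg[of M "space M"] unfolding m_def by linarith
  then show ?thesis
  proof cases
    case 1
    then have "AE x in M. \<bar>u x\<bar> powr p = 0"
      using int unfolding N_def by (subst integral_nonneg_eq_0_iff_AE[symmetric]) auto
    then have "(\<integral>x. \<bar>u x\<bar> \<partial>M) = 0" by (simp add: integral_eq_zero_AE)
    then show ?thesis by (simp add: Lp_norm_nonneg)
  next
    case 2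
    define t where "t = (N / m) powr (1/p)"
    have t: "t > 0" "t powr p = N / m" using 2 assms(2) by (simp_all add: t_def powr_powr)
    have "(\<integral>x. \<bar>u x\<bar> \<partial>M) \<le> (\<integral>x. \<bar>u x\<bar> powr p / (t powr (p - 1) * p) + t * (1 - 1/p) \<partial>M)"
      using assms t int Lp_integrable[OF assms]
      by (intro integral_mono Youngs_inequality_powr integrable_abs
          Bochner_Integration.integrable_add integrable_divide) auto
    also have "\<dots> = N / (t powr p / t * p) + t * (1 - 1/p) * m"
      using int t by (simp add: N_def m_def powr_diff)
    also have "\<dots> = t * m" using t 2 assms(2) by (simp add: field_simps)
    also have "\<dots> = m powr (1 - 1/p) * N powr (1/p)"
      using 2 by (simp add: t_def powr_divide powr_diff field_simps)
    finally show ?thesis unfolding Lp_norm_def m_def N_def by simp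
  next
    case 3
    then have "AE x in M. False" unfolding m_def
      by (simp add: AE_iff_measurable[OF _ refl] emeasure_eq_measure)
    then have "(\<integral>x. \<bar>u x\<bar> \<partial>M) = 0" by (intro integral_eq_zero_AE) (auto elim: eventually_mono)
    then show ?thesis by (simp add: Lp_norm_nonneg)
  qed
qed

end

section \<open>Functionals on \<open>L\<^sup>\<infinity>\<close> dominated by an \<open>L\<^sup>p\<close> norm\<close>

lemma Linfty_uniform_simple_approx:
  assumes "f \<in> Linfty M" "n > 0"
  obtains S :: "int set" and A c where "finite S" "\<And>k. k \<in> S \<Longrightarrow> A k \<in> sets M"
    "AE x in M. \<bar>f x - (\<Sum>k\<in>S. c k * indicator (A k) x)\<bar> \<le> 1 / real n"
proof -
  obtain K where K: "AE x in M. \<bar>f x\<bar> \<le> K" and meas: "f \<in> borel_measurable M"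
    using assms(1) by (auto simp: Linfty_def)
  define N where "N = \<lceil>real n * \<bar>K\<bar>\<rceil> + 1"
  define A where "A k = {x \<in> space M. \<lfloor>real n * f x\<rfloor> = k}" for k
  have "AE x in M. \<bar>f x - (\<Sum>k\<in>{-N..N}. (of_int k / real n) * indicator (A k) x)\<bar> \<le> 1 / real n"
    using K AE_space
  proof eventually_elim
    case (elim x)
    define k where "k = \<lfloor>real n * f x\<rfloor>"
    have "\<bar>real n * f x\<bar> \<le> real n * \<bar>K\<bar>"
      using elim(1) by (simp add: abs_mult mult_left_mono)
    then have "k \<in> {-N..N}" unfolding k_def N_def by (auto simp: abs_le_iff) linarith+
    have "(\<Sum>j\<in>{-N..N}. (of_int j / real n) * indicator (A j) x)
        = (\<Sum>j\<in>{-N..N}. if j = k then of_int j / real n else 0)"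
      by (intro sum.cong) (auto simp: A_def k_def elim(2) indicator_def)
    also have "\<dots> = of_int k / real n" using \<open>k \<in> {-N..N}\<close> by simp
    finally have sum_eq: "(\<Sum>j\<in>{-N..N}. (of_int j / real n) * indicator (A j) x) = of_int k / real n" .
    have "f x - of_int k / real n = (real n * f x - of_int k) / real n"
      using assms(2) by (simp add: field_simps)
    moreover have "\<bar>real n * f x - of_int k\<bar> \<le> 1"
      unfolding k_def by linarith
    ultimately show ?case
      unfolding sum_eq using assms(2) by (simp add: abs_divide divide_right_mono)
  qed
  moreover have "A k \<in> sets M" for k unfolding A_def using meas by measurable
  ultimately show ?thesis by (intro that[of "{-N..N}" A "\<lambda>k. of_int k / real n"]) auto
qed

lemma Linfty_functional_eq_0:
  fixes \<Lambda> :: "('a \<Rightarrow> real) \<Rightarrow> real"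
  assumes lincomb: "\<And>f g a b. f \<in> Linfty M \<Longrightarrow> g \<in> Linfty M \<Longrightarrow>
      \<Lambda> (\<lambda>x. a * f x + b * g x) = a * \<Lambda> f + b * \<Lambda> g"
    and indicator: "\<And>A. A \<in> sets M \<Longrightarrow> \<Lambda> (indicator A) = 0"
    and bounded: "\<And>f K. f \<in> Linfty M \<Longrightarrow> AE x in M. \<bar>f x\<bar> \<le> K \<Longrightarrow> \<bar>\<Lambda> f\<bar> \<le> K * B"
    and f: "f \<in> Linfty M"
  shows "\<Lambda> f = 0"
proof -
  have sum: "\<Lambda> (\<lambda>x. \<Sum>k\<in>S. c k * indicator (A k) x) = 0"
    if "finite S" "\<And>k. k \<in> S \<Longrightarrow> A k \<in> sets M" for S :: "int set" and c A
    using that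
  proof (induction S rule: finite_induct)
    case empty
    show ?case using lincomb[OF Linfty_const Linfty_const, of 0 0 0 0] by simp
  next
    case (insert k S)
    have "\<Lambda> (\<lambda>x. \<Sum>k\<in>insert k S. c k * indicator (A k) x)
        = \<Lambda> (\<lambda>x. c k * indicator (A k) x + 1 * (\<Sum>k\<in>S. c k * indicator (A k) x))"
      by (simp only: sum.insert[OF insert.hyps] mult_1)
    also have "\<dots> = c k * \<Lambda> (indicator (A k)) + 1 * \<Lambda> (\<lambda>x. \<Sum>k\<in>S. c k * indicator (A k) x)"
      using insert by (intro lincomb Linfty_indicator Linfty_sum) auto
    finally show ?case using insert indicator by simp
  qed
  have "\<bar>\<Lambda> f\<bar> \<le> B / real n" if "n > 0" for n :: nat
  proof -
    obtain S :: "int set" and A c where S: "finite S" "\<And>k. k \<in> S \<Longrightarrow> A k \<in> sets M"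
      and approx: "AE x in M. \<bar>f x - (\<Sum>k\<in>S. c k * indicator (A k) x)\<bar> \<le> 1 / real n"
      by (rule Linfty_uniform_simple_approx[OF f \<open>n > 0\<close>]) auto
    define g where "g x = (\<Sum>k\<in>S. c k * indicator (A k) x)" for x
    have g: "g \<in> Linfty M" unfolding g_def using S by (intro Linfty_sum Linfty_indicator)
    have d: "(\<lambda>x. f x - g x) \<in> Linfty M" using Linfty_lincomb[OF f g, of 1 "-1"] by simp
    have "\<Lambda> g = 0" unfolding g_def using S by (intro sum) auto
    then have "\<Lambda> f = \<Lambda> (\<lambda>x. f x - g x)" using lincomb[OF g d, of 1 1] by simp
    then show ?thesis using bounded[OF d approx[folded g_def]] by simp
  qed
  then have "eventually (\<lambda>n. \<bar>\<Lambda> f\<bar> \<le> B / real n) sequentially"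
    by (intro eventually_sequentiallyI[of 1]) auto
  then have "\<bar>\<Lambda> f\<bar> \<le> 0"
    by (intro tendsto_lowerbound[OF lim_const_over_n]) auto
  then show ?thesis by simp
qed

lemma abs_le_of_positive_functional:
  fixes \<Lambda> :: "('a \<Rightarrow> real) \<Rightarrow> real"
  assumes lincomb: "\<And>f g a b. f \<in> V \<Longrightarrow> g \<in> V \<Longrightarrow> \<Lambda> (\<lambda>x. a * f x + b * g x) = a * \<Lambda> f + b * \<Lambda> g"
    and closed: "\<And>f g a b. f \<in> V \<Longrightarrow> g \<in> V \<Longrightarrow> (\<lambda>x. a * f x + b * g x) \<in> V"
    and nonneg: "\<And>f. f \<in> V \<Longrightarrow> AE x in M. 0 \<le> f x \<Longrightarrow> 0 \<le> \<Lambda> f"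
    and "(\<lambda>_. 1) \<in> V" "f \<in> V" and K: "AE x in M. \<bar>f x\<bar> \<le> K"
  shows "\<bar>\<Lambda> f\<bar> \<le> K * \<Lambda> (\<lambda>_. 1)"
proof -
  have "0 \<le> K * \<Lambda> (\<lambda>_. 1) + a * \<Lambda> f" if "a = 1 \<or> a = -1" for a
  proof -
    have "AE x in M. 0 \<le> K * 1 + a * f x" using K by eventually_elim (use that in auto)
    from nonneg[OF closed[OF assms(4,5)] this] show ?thesis
      by (simp only: lincomb[OF assms(4,5)])
  qed
  from this[of 1] this[of "-1"] show ?thesis by linarith
qed

context finite_measure
begin

lemma integral_powr_conj_le_of_pairing:
  assumes "p > 1"
    and \<rho>: "integrable M \<rho>"
    and pairing: "\<And>f. f \<in> Linfty M \<Longrightarrow> (\<integral>x. \<rho> x * f x \<partial>M) \<le> C * Lp_norm M p f"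
    and g: "g \<in> borel_measurable M" "\<And>x. 0 \<le> g x" "\<And>x. g x \<le> \<rho> x" "\<And>x. g x \<le> B"
  shows "(\<integral>x. g x powr (p / (p - 1)) \<partial>M) \<le> C powr (p / (p - 1))"
proof -
  define q where "q = p / (p - 1)"
  have q: "q > 1" "(q - 1) * p = q" "(1 - 1/p) * q = 1"
    using \<open>p > 1\<close> by (simp_all add: q_def field_simps)
  define S where "S = (\<integral>x. g x powr q \<partial>M)"
  define f where "f x = g x powr (q - 1)" for x
  have f_bound: "\<bar>f x\<bar> \<le> B powr (q - 1)" for x
    unfolding f_def using g q by (simp add: powr_mono2)
  have "f \<in> borel_measurable M" unfolding f_def using g by measurable
  with f_bound have f: "f \<in> Linfty M" unfolding Linfty_def by auto
  have "AE x in M. norm (g x powr q) \<le> B powr q"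
    using g q by (auto intro!: powr_mono2)
  then have int_gq: "integrable M (\<lambda>x. g x powr q)"
    using g by (intro integrable_const_bound) auto
  have "AE x in M. norm (\<rho> x * f x) \<le> norm (B powr (q - 1) * \<rho> x)"
    using g f_bound by (intro AE_I2) (auto simp: abs_mult mult.commute intro!: mult_left_mono order_trans[OF _ g(3)])
  then have int_\<rho>f: "integrable M (\<lambda>x. \<rho> x * f x)"
    using g \<rho> unfolding f_def by (intro Bochner_Integration.integrable_bound[OF integrable_mult_right[OF \<rho>]]) auto
  have "S \<le> (\<integral>x. \<rho> x * f x \<partial>M)"
    unfolding S_def
  proof (intro integral_mono[OF int_gq int_\<rho>f])
    fix x
    have "g x powr q = g x * f x"
      using g(2)[of x] powr_add[of "g x" 1 "q - 1"] q by (cases "g x = 0") (auto simp: f_def)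
    also have "\<dots> \<le> \<rho> x * f x" unfolding f_def using g by (intro mult_right_mono) auto
    finally show "g x powr q \<le> \<rho> x * f x" .
  qed
  also have "\<dots> \<le> C * Lp_norm M p f" by (rule pairing[OF f])
  also have "Lp_norm M p f = S powr (1/p)"
    unfolding Lp_norm_def S_def f_def using g by (simp add: powr_powr q(2))
  finally have S: "S \<le> C * S powr (1/p)" .
  show ?thesis
  proof (cases "S = 0")
    case False
    then have "S > 0" unfolding S_def using g by (simp add: integral_nonneg_AE order_neq_le_trans)
    have "S powr (1/p) * S powr (1 - 1/p) \<le> S powr (1/p) * C"
      using S \<open>S > 0\<close> by (simp add: powr_add[symmetric] mult.commute)
    then have "S powr (1 - 1/p) \<le> C" using \<open>S > 0\<close> by simp
    then have "(S powr (1 - 1/p)) powr q \<le> C powr q" using q by (intro powr_mono2) auto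
    then show ?thesis using \<open>S > 0\<close> by (simp add: S_def q_def[symmetric] powr_powr q(3))
  qed (simp add: S_def q_def)
qed

lemma Lq_of_pairing_bound:
  assumes "p > 1"
    and \<rho>: "\<rho> \<in> borel_measurable M" "\<And>x. 0 \<le> \<rho> x" "integrable M \<rho>"
    and pairing: "\<And>f. f \<in> Linfty M \<Longrightarrow> (\<integral>x. \<rho> x * f x \<partial>M) \<le> C * Lp_norm M p f"
  shows "\<rho> \<in> Lp M (p / (p - 1))"
proof -
  define q where "q = p / (p - 1)"
  have "q > 1" using \<open>p > 1\<close> by (simp add: q_def field_simps)
  define g where "g n x = min (\<rho> x) (real n) powr q" for n :: nat and x
  have g_int: "integrable M (g n)" for n
    unfolding g_def using \<rho> \<open>q > 1\<close>
    by (intro integrable_const_bound[where B = "real n powr q"] AE_I2) (auto intro!: powr_mono2)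
  have g_le: "(\<integral>x. g n x \<partial>M) \<le> C powr q" for n
    unfolding g_def q_def using \<rho>
    by (intro integral_powr_conj_le_of_pairing[where B = "real n", OF \<open>p > 1\<close> \<rho>(3) pairing]) auto
  have g_mono: "mono (\<lambda>n. g n x)" for x
    unfolding mono_def g_def using \<rho> \<open>q > 1\<close> by (auto intro!: powr_mono2 min.mono)
  have g_lim: "(\<lambda>n. g n x) \<longlonglongrightarrow> \<rho> x powr q" for x
  proof (rule tendsto_eventually)
    obtain N :: nat where "\<rho> x \<le> real N" using real_nat_ceiling_ge by blast
    then show "eventually (\<lambda>n. g n x = \<rho> x powr q) sequentially"
      unfolding eventually_sequentially g_def by (intro exI[of _ N]) auto
  qed
  have "incseq (\<lambda>n. \<integral>x. g n x \<partial>M)"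
    unfolding incseq_def by (auto intro!: integral_mono g_int monoD[OF g_mono])
  then have "(\<lambda>n. \<integral>x. g n x \<partial>M) \<longlonglongrightarrow> (SUP n. \<integral>x. g n x \<partial>M)"
    using g_le by (intro LIMSEQ_incseq_SUP bdd_aboveI[of _ "C powr q"]) auto
  then have "integrable M (\<lambda>x. \<rho> x powr q)"
    using g_mono g_lim \<rho>(1) by (intro integrable_monotone_convergence[OF g_int]) auto
  moreover have "(\<lambda>x. \<bar>\<rho> x\<bar> powr q) = (\<lambda>x. \<rho> x powr q)" using \<rho>(2) by simp
  ultimately show ?thesis using \<rho>(1) unfolding Lp_def q_def by simp
qed

end

locale Lp_dominated_functional = finite_measure M
  for M :: "'a measure" and p :: real and L :: "('a \<Rightarrow> real) \<Rightarrow> real" and C :: real +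
  assumes p_ge_1: "p \<ge> 1"
    and lincomb: "\<And>f g a b. f \<in> Linfty M \<Longrightarrow> g \<in> Linfty M \<Longrightarrow>
      L (\<lambda>x. a * f x + b * g x) = a * L f + b * L g"
    and nonneg: "\<And>f. f \<in> Linfty M \<Longrightarrow> AE x in M. 0 \<le> f x \<Longrightarrow> 0 \<le> L f"
    and dominated: "\<And>f. f \<in> Linfty M \<Longrightarrow> L f \<le> C * Lp_norm M p f"
begin

lemma cong_AE:
  assumes f: "f \<in> Linfty M" and g: "g \<in> Linfty M" and eq: "AE x in M. f x = g x"
  shows "L f = L g"
proof -
  have "L (\<lambda>x. a * f x + (- a) * g x) \<le> 0" for a
  proof -
    have "AE x in M. a * f x + (- a) * g x = 0" using eq by eventually_elim simp
    then have "Lp_norm M p (\<lambda>x. a * f x + (- a) * g x) = 0" by (rule Lp_norm_eq_0_AE)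
    with dominated[OF Linfty_lincomb[OF f g, of a "- a"]] show ?thesis by simp
  qed
  from this[of 1] this[of "-1"] show ?thesis by (simp only: lincomb[OF f g])
qed

lemma abs_le:
  assumes "f \<in> Linfty M" "AE x in M. \<bar>f x\<bar> \<le> K"
  shows "\<bar>L f\<bar> \<le> K * L (\<lambda>_. 1)"
  by (rule abs_le_of_positive_functional[OF lincomb Linfty_lincomb nonneg Linfty_const assms])

lemma indicator_nonneg: "A \<in> sets M \<Longrightarrow> 0 \<le> L (indicator A)"
  by (rule nonneg[OF Linfty_indicator]) auto

lemma indicator_le_powr: "A \<in> sets M \<Longrightarrow> L (indicator A) \<le> C * measure M A powr (1/p)"
  using dominated[OF Linfty_indicator] Lp_norm_indicator by simp

lemma indicator_null: "A \<in> sets M \<Longrightarrow> measure M A = 0 \<Longrightarrow> L (indicator A) = 0"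
  using indicator_le_powr[of A] indicator_nonneg[of A] by simp

text \<open>Continuity from above of \<open>A \<mapsto> L 1\<^sub>A\<close> at \<open>{}\<close> is where the domination by
  \<open>m(A)\<^bsup>1/p\<^esup>\<close> enters.\<close>

lemma countably_additive_indicator: "countably_additive (sets M) (\<lambda>A. ennreal (L (indicator A)))"
proof (rule sets.empty_continuous_imp_countably_additive)
  show "positive (sets M) (\<lambda>A. ennreal (L (indicator A)))"
    unfolding positive_def using indicator_null[of "{}"] by simp
  have "L (indicator (A \<union> B)) = L (indicator A) + L (indicator B)"
    if A: "A \<in> sets M" and B: "B \<in> sets M" and "A \<inter> B = {}" for A B
  proof -
    have "indicator (A \<union> B) = (\<lambda>x. 1 * indicator A x + 1 * indicator B x :: real)"
      using \<open>A \<inter> B = {}\<close> by (auto simp: fun_eq_iff indicator_disj_union)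
    then show ?thesis
      by (simp only: lincomb[OF Linfty_indicator[OF A] Linfty_indicator[OF B]])
  qed
  then show "additive (sets M) (\<lambda>A. ennreal (L (indicator A)))"
    unfolding additive_def by (simp add: indicator_nonneg)
  show "\<forall>A\<in>sets M. ennreal (L (indicator A)) \<noteq> \<infinity>" by simp
  fix A :: "nat \<Rightarrow> 'a set" assume A: "range A \<subseteq> sets M" "decseq A" "(\<Inter>i. A i) = {}"
  have "(\<lambda>i. measure M (A i)) \<longlonglongrightarrow> 0"
    using finite_Lim_measure_decseq[OF A(1,2)] A(3) by simp
  then have "(\<lambda>i. measure M (A i) powr (1/p)) \<longlonglongrightarrow> 0"
    by (rule tendsto_zero_powrI[OF _ tendsto_const]) (use p_ge_1 in auto)
  then have "(\<lambda>i. C * measure M (A i) powr (1/p)) \<longlonglongrightarrow> 0"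
    by (rule tendsto_mult_right_zero)
  then have "(\<lambda>i. L (indicator (A i))) \<longlonglongrightarrow> 0"
  proof (rule tendsto_sandwich[OF _ _ tendsto_const, rotated 2])
    show "\<forall>\<^sub>F i in sequentially. 0 \<le> L (indicator (A i))"
      using A(1) by (intro always_eventually allI indicator_nonneg) auto
    show "\<forall>\<^sub>F i in sequentially. L (indicator (A i)) \<le> C * measure M (A i) powr (1/p)"
      using A(1) by (intro always_eventually allI indicator_le_powr) auto
  qed
  then show "(\<lambda>i. ennreal (L (indicator (A i)))) \<longlonglongrightarrow> 0"
    using tendsto_ennrealI[of _ 0] by simp
qed

definition representing_measure :: "'a measure" where
  "representing_measure = measure_of (space M) (sets M) (\<lambda>A. ennreal (L (indicator A)))"

lemma sets_representing_measure [simp]: "sets representing_measure = sets M"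
  and space_representing_measure [simp]: "space representing_measure = space M"
  by (simp_all add: representing_measure_def)

lemma emeasure_representing_measure:
  "A \<in> sets M \<Longrightarrow> emeasure representing_measure A = ennreal (L (indicator A))"
  unfolding representing_measure_def
  by (subst emeasure_measure_of_sigma[OF sets.sigma_algebra_axioms _ countably_additive_indicator])
     (auto simp: positive_def indicator_null)

lemma emeasure_representing_measure_space:
  "emeasure representing_measure (space M) = ennreal (L (\<lambda>_. 1))"
proof -
  have "L (indicator (space M)) = L (\<lambda>_. 1)"
    by (rule cong_AE[OF Linfty_indicator Linfty_const]) auto
  then show ?thesis by (simp add: emeasure_representing_measure)
qed

lemma finite_measure_representing_measure: "finite_measure representing_measure"
  by (rule finite_measureI) (simp add: emeasure_representing_measure_space)

lemma absolutely_continuous_representing_measure: "absolutely_continuous M representing_measure"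
  unfolding absolutely_continuous_def
  by (auto simp: null_sets_def emeasure_eq_measure emeasure_representing_measure indicator_null)

lemma integral_representing_measure:
  assumes f: "f \<in> Linfty M"
  shows "(\<integral>x. f x \<partial>representing_measure) = L f"
proof -
  interpret N: finite_measure representing_measure by (rule finite_measure_representing_measure)
  have AE: "AE x in representing_measure. P x" if "AE x in M. P x" for P
    by (rule absolutely_continuous_AE[OF _ absolutely_continuous_representing_measure that]) simp
  have integrable: "integrable representing_measure f" if bounded: "f \<in> Linfty M" for f
  proof -
    obtain K where "AE x in M. \<bar>f x\<bar> \<le> K" "f \<in> borel_measurable M"
      using bounded unfolding Linfty_def by blast
    then show ?thesis
      by (intro N.integrable_const_bound[of f K])
        (auto dest: AE simp: measurable_cong_sets[OF sets_representing_measure refl])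
  qed
  have integral_bound: "\<bar>\<integral>x. f x \<partial>representing_measure\<bar> \<le> K * L (\<lambda>_. 1)"
    if "f \<in> Linfty M" "AE x in M. \<bar>f x\<bar> \<le> K" for f K
  proof -
    have "\<bar>\<integral>x. f x \<partial>representing_measure\<bar> \<le> (\<integral>x. \<bar>f x\<bar> \<partial>representing_measure)"
      by (rule integral_abs_bound)
    also have "\<dots> \<le> (\<integral>x. K \<partial>representing_measure)"
      using that by (intro integral_mono_AE integrable_abs integrable AE Linfty_const) auto
    also have "\<dots> = K * L (\<lambda>_. 1)"
      using emeasure_representing_measure_space nonneg[OF Linfty_const, of 1]
      by (simp add: N.emeasure_eq_measure)
    finally show ?thesis .
  qed
  have "(\<lambda>f. (\<integral>x. f x \<partial>representing_measure) - L f) f = 0"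
  proof (rule Linfty_functional_eq_0[where B = "2 * L (\<lambda>_. 1)", OF _ _ _ f])
    show "(\<integral>x. a * g x + b * h x \<partial>representing_measure) - L (\<lambda>x. a * g x + b * h x)
        = a * ((\<integral>x. g x \<partial>representing_measure) - L g) + b * ((\<integral>x. h x \<partial>representing_measure) - L h)"
      if "g \<in> Linfty M" "h \<in> Linfty M" for g h a b
      using that integrable[OF that(1)] integrable[OF that(2)] by (simp add: lincomb algebra_simps)
    show "(\<integral>x. indicator A x \<partial>representing_measure) - L (indicator A) = 0" if "A \<in> sets M" for A
      using that emeasure_representing_measure[OF that] indicator_nonneg[OF that]
      by (simp add: N.emeasure_eq_measure)
    show "\<bar>(\<integral>x. g x \<partial>representing_measure) - L g\<bar> \<le> K * (2 * L (\<lambda>_. 1))"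
      if "g \<in> Linfty M" "AE x in M. \<bar>g x\<bar> \<le> K" for g K
      using integral_bound[OF that] abs_le[OF that] by linarith
  qed
  then show ?thesis by simp
qed

lemma density_representation:
  obtains \<rho> where "\<rho> \<in> borel_measurable M" "\<And>x. 0 \<le> \<rho> x"
    "density M (\<lambda>x. ennreal (\<rho> x)) = representing_measure"
    "p > 1 \<Longrightarrow> \<rho> \<in> Lp M (p / (p - 1))"
proof -
  obtain \<rho>' where \<rho>': "\<rho>' \<in> borel_measurable M" "density M \<rho>' = representing_measure"
    using Radon_Nikodym[OF absolutely_continuous_representing_measure] by auto
  define \<rho> where "\<rho> x = enn2real (\<rho>' x)" for x
  have \<rho>_meas: "\<rho> \<in> borel_measurable M" unfolding \<rho>_def using \<rho>'(1) by measurable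
  have "integral\<^sup>N M \<rho>' = emeasure (density M \<rho>') (space M)"
    using \<rho>'(1) by (simp add: emeasure_density)
  also have "\<dots> = ennreal (L (\<lambda>_. 1))"
    using \<rho>'(2) emeasure_representing_measure_space by simp
  finally have "integral\<^sup>N M \<rho>' = ennreal (L (\<lambda>_. 1))" .
  then have "AE x in M. \<rho>' x \<noteq> \<infinity>" by (intro nn_integral_PInf_AE[OF \<rho>'(1)]) simp
  then have "density M (\<lambda>x. ennreal (\<rho> x)) = density M \<rho>'"
    using \<rho>_meas \<rho>'(1) by (intro density_cong) (auto simp: \<rho>_def less_top elim!: eventually_mono)
  with \<rho>'(2) have density: "density M (\<lambda>x. ennreal (\<rho> x)) = representing_measure" by simp
  have "p > 1 \<Longrightarrow> \<rho> \<in> Lp M (p / (p - 1))"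
  proof (rule Lq_of_pairing_bound[OF _ \<rho>_meas])
    have "(\<integral>\<^sup>+x. ennreal (\<rho> x) \<partial>M) = ennreal (L (\<lambda>_. 1))"
      using emeasure_representing_measure_space \<rho>_meas
      by (simp add: density[symmetric] emeasure_density)
    then show "integrable M \<rho>"
      using \<rho>_meas by (intro integrableI_nonneg) (auto simp: \<rho>_def)
    show "(\<integral>x. \<rho> x * f x \<partial>M) \<le> C * Lp_norm M p f" if "f \<in> Linfty M" for f
    proof -
      have "(\<integral>x. \<rho> x * f x \<partial>M) = (\<integral>x. f x \<partial>density M (\<lambda>x. ennreal (\<rho> x)))"
        using that \<rho>_meas by (subst integral_density) (auto simp: Linfty_def \<rho>_def)
      also have "\<dots> = L f" by (simp add: density integral_representing_measure[OF that])
      finally show ?thesis using dominated[OF that] by simp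
    qed
  qed (auto simp: \<rho>_def)
  with \<rho>_meas density show ?thesis by (intro that) (auto simp: \<rho>_def)
qed

end

section \<open>Markov semigroups with uniformly bounded resolvents\<close>

text \<open>Tychonoff's theorem, in the form used to pass to a limit along \<open>F\<close>.\<close>

lemma pointwise_bounded_cluster_point:
  fixes X :: "'i \<Rightarrow> 'b \<Rightarrow> real"
  assumes "F \<noteq> bot" and bounded: "eventually (\<lambda>i. \<forall>b. \<bar>X i b\<bar> \<le> B b) F"
  shows "\<exists>L. \<forall>Q. closed (Collect Q) \<longrightarrow> eventually (\<lambda>i. Q (X i)) F \<longrightarrow> Q L"
proof -
  define K where "K = Pi UNIV (\<lambda>b. cball (0::real) (B b))"
  have "compactin (product_topology (\<lambda>_. euclidean) UNIV) (PiE UNIV (\<lambda>b. cball (0::real) (B b)))"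
    by (subst compactin_PiE) auto
  then have "compact K"
    by (simp add: K_def euclidean_product_topology PiE_UNIV_domain)
  moreover have "filtermap X F \<noteq> bot" using assms(1) by (simp add: filtermap_bot_iff)
  moreover have "eventually (\<lambda>y. y \<in> K) (filtermap X F)"
    unfolding eventually_filtermap K_def using bounded by eventually_elim auto
  ultimately obtain L where L: "inf (nhds L) (filtermap X F) \<noteq> bot"
    unfolding compact_filter by blast
  have "Q L" if "closed (Collect Q)" "eventually (\<lambda>i. Q (X i)) F" for Q
  proof (rule ccontr)
    assume "\<not> Q L"
    with \<open>closed (Collect Q)\<close> have "eventually (\<lambda>y. \<not> Q y) (nhds L)"
      by (intro eventually_nhds_in_open[of "- Collect Q", simplified]) (auto simp: open_Compl)
    moreover have "eventually Q (filtermap X F)" using that(2) by (simp add: eventually_filtermap)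
    ultimately have "eventually (\<lambda>_. False) (inf (nhds L) (filtermap X F))"
      unfolding eventually_inf by blast
    with L show False by (simp add: eventually_False)
  qed
  then show ?thesis by blast
qed

lemma resolvent_almost_invariantI_powr:
  assumes "p > 0" "C \<ge> 0"
    and "\<And>A \<alpha>. A \<in> sets M \<Longrightarrow> \<alpha> > 0 \<Longrightarrow>
      (\<integral>x. \<alpha> * R \<alpha> (indicator A) x \<partial>M) \<le> C * measure M A powr (1/p)"
  shows "resolvent_almost_invariant M R"
  unfolding resolvent_almost_invariant_def
proof (intro exI conjI)
  define \<phi> where "\<phi> A = C * measure M A powr (1/p)" for A :: "'a set"
  show "0 \<le> (0::real)" "(0::real) < 1" by auto
  show "\<forall>A\<in>sets M. 0 \<le> \<phi> A" unfolding \<phi>_def using assms by simp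
  show "\<forall>A\<in>sets M. \<forall>\<alpha>>0. (\<integral>x. \<alpha> * R \<alpha> (indicator A) x \<partial>M) \<le> \<phi> A + 0 * measure M (space M)"
    using assms(3) by (simp add: \<phi>_def)
  show "\<forall>\<epsilon>>0. \<exists>\<eta>>0. \<forall>A\<in>sets M. measure M A < \<eta> \<longrightarrow> \<phi> A < \<epsilon>"
  proof (intro allI impI)
    fix \<epsilon> :: real assume "\<epsilon> > 0"
    define \<eta> where "\<eta> = (\<epsilon> / (C + 1)) powr p"
    have "\<phi> A < \<epsilon>" if "measure M A < \<eta>" for A
    proof -
      have "measure M A powr (1/p) < \<eta> powr (1/p)"
        using that assms by (intro powr_less_mono2) auto
      also have "\<dots> = \<epsilon> / (C + 1)"
        using \<open>\<epsilon> > 0\<close> assms by (simp add: \<eta>_def powr_powr)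
      finally have "\<phi> A \<le> C * (\<epsilon> / (C + 1))"
        unfolding \<phi>_def using assms by (intro mult_left_mono) auto
      also have "\<dots> < \<epsilon>" using \<open>\<epsilon> > 0\<close> assms by (simp add: field_simps)
      finally show ?thesis .
    qed
    moreover have "\<eta> > 0" using \<open>\<epsilon> > 0\<close> assms by (simp add: \<eta>_def)
    ultimately show "\<exists>\<eta>>0. \<forall>A\<in>sets M. measure M A < \<eta> \<longrightarrow> \<phi> A < \<epsilon>" by blast
  qed
qed

locale markov_resolvent = finite_measure M
  for M :: "'a measure" and p :: real and P R :: "real \<Rightarrow> ('a \<Rightarrow> real) \<Rightarrow> ('a \<Rightarrow> real)" +
  assumes space_pos: "emeasure M (space M) > 0"
    and p_ge_1: "p \<ge> 1"
    and semigroup: "markov_C0_semigroup M p P"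
    and resolvent: "\<forall>\<alpha>>0. \<forall>f\<in>Lp M p. is_resolvent M p P \<alpha> f (R \<alpha> f)"
    and resolvent_bounded: "\<exists>C. \<forall>\<alpha>>0. \<forall>f\<in>Lp M p. Lp_norm M p (\<lambda>x. \<alpha> * R \<alpha> f x) \<le> C * Lp_norm M p f"
begin

abbreviation total_mass :: real where
  "total_mass \<equiv> measure M (space M)"

lemma total_mass_pos: "total_mass > 0"
  using space_pos by (simp add: emeasure_eq_measure)

lemma one_Lp: "(\<lambda>_. 1) \<in> Lp M p"
  using Linfty_Lp[OF Linfty_const] p_ge_1 by simp

lemma lincomb_Lp: "f \<in> Lp M p \<Longrightarrow> g \<in> Lp M p \<Longrightarrow> (\<lambda>x. a * f x + b * g x) \<in> Lp M p"
  using Lp_lincomb p_ge_1 by simp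

lemma markovian_P: "t \<ge> 0 \<Longrightarrow> markovian_op M p (P t)"
  using semigroup by (auto simp: markov_C0_semigroup_def)

lemma P_Lp: "t \<ge> 0 \<Longrightarrow> f \<in> Lp M p \<Longrightarrow> P t f \<in> Lp M p"
  using markovian_P unfolding markovian_op_def by blast

lemma P_lincomb: "t \<ge> 0 \<Longrightarrow> f \<in> Lp M p \<Longrightarrow> g \<in> Lp M p \<Longrightarrow>
    AE x in M. P t (\<lambda>y. a * f y + b * g y) x = a * P t f x + b * P t g x"
  using markovian_P unfolding markovian_op_def by blast

lemma P_nonneg: "t \<ge> 0 \<Longrightarrow> f \<in> Lp M p \<Longrightarrow> AE x in M. 0 \<le> f x \<Longrightarrow> AE x in M. 0 \<le> P t f x"
  using markovian_P unfolding markovian_op_def by blast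

lemma P_one: "t \<ge> 0 \<Longrightarrow> AE x in M. P t (\<lambda>_. 1) x = 1"
  using markovian_P unfolding markovian_op_def by blast

lemma P_add: "s \<ge> 0 \<Longrightarrow> t \<ge> 0 \<Longrightarrow> f \<in> Lp M p \<Longrightarrow> AE x in M. P (s + t) f x = P s (P t f) x"
  using semigroup unfolding markov_C0_semigroup_def by blast

lemma P_measurable: "t \<ge> 0 \<Longrightarrow> f \<in> Lp M p \<Longrightarrow> P t f \<in> borel_measurable M"
  using P_Lp unfolding Lp_def by blast

lemma P_integrable: "t \<ge> 0 \<Longrightarrow> f \<in> Lp M p \<Longrightarrow> integrable M (P t f)"
  using Lp_integrable[OF P_Lp p_ge_1] by blast

lemma P_abs_le:
  assumes t: "t \<ge> 0" and f: "f \<in> Lp M p" and K: "AE x in M. \<bar>f x\<bar> \<le> K"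
  shows "AE x in M. \<bar>P t f x\<bar> \<le> K"
proof -
  have pos: "AE x in M. 0 \<le> K * P t (\<lambda>_. 1) x + a * P t f x" if "a = 1 \<or> a = -1" for a
  proof -
    have "AE x in M. 0 \<le> K * 1 + a * f x" using K by eventually_elim (use that in auto)
    then have "AE x in M. 0 \<le> P t (\<lambda>y. K * 1 + a * f y) x"
      by (rule P_nonneg[OF t lincomb_Lp[OF one_Lp f]])
    with P_lincomb[OF t one_Lp f, of K a] show ?thesis by eventually_elim simp
  qed
  from pos[of 1, OF disjI1[OF refl]] pos[of "-1", OF disjI2[OF refl]] P_one[OF t]
  show ?thesis by eventually_elim auto
qed

lemma P_Linfty:
  assumes "t \<ge> 0" "f \<in> Linfty M"
  shows "P t f \<in> Linfty M"
proof -
  obtain K where K: "AE x in M. \<bar>f x\<bar> \<le> K" using assms by (auto simp: Linfty_def)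
  have f: "f \<in> Lp M p" using Linfty_Lp[OF assms(2)] p_ge_1 by simp
  show ?thesis unfolding Linfty_def using P_abs_le[OF assms(1) f K] P_measurable[OF assms(1) f] by blast
qed

definition orbit_integral :: "('a \<Rightarrow> real) \<Rightarrow> real \<Rightarrow> real" where
  "orbit_integral f t = (\<integral>x. P t f x \<partial>M)"

lemma orbit_integral_lincomb:
  assumes t: "t \<ge> 0" and f: "f \<in> Lp M p" and g: "g \<in> Lp M p"
  shows "orbit_integral (\<lambda>y. a * f y + b * g y) t = a * orbit_integral f t + b * orbit_integral g t"
proof -
  have "orbit_integral (\<lambda>y. a * f y + b * g y) t = (\<integral>x. a * P t f x + b * P t g x \<partial>M)"
    unfolding orbit_integral_def using P_measurable[OF t] f g
    by (intro integral_cong_AE P_lincomb[OF t f g] P_measurable[OF t lincomb_Lp]) auto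
  also have "\<dots> = a * orbit_integral f t + b * orbit_integral g t"
    using P_integrable[OF t f] P_integrable[OF t g] by (simp add: orbit_integral_def)
  finally show ?thesis .
qed

lemma orbit_integral_nonneg:
  "t \<ge> 0 \<Longrightarrow> f \<in> Lp M p \<Longrightarrow> AE x in M. 0 \<le> f x \<Longrightarrow> orbit_integral f t \<ge> 0"
  unfolding orbit_integral_def by (rule integral_nonneg_AE[OF P_nonneg])

lemma orbit_integral_one:
  assumes "t \<ge> 0"
  shows "orbit_integral (\<lambda>_. 1) t = total_mass"
proof -
  have "(\<integral>x. P t (\<lambda>_. 1) x \<partial>M) = (\<integral>x. 1 \<partial>M)"
    by (rule integral_cong_AE[OF P_measurable[OF assms one_Lp] _ P_one[OF assms]]) simp
  then show ?thesis by (simp add: orbit_integral_def)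
qed

lemma orbit_integral_abs_le:
  assumes "t \<ge> 0" "f \<in> Lp M p" "AE x in M. \<bar>f x\<bar> \<le> K"
  shows "\<bar>orbit_integral f t\<bar> \<le> K * total_mass"
  using abs_le_of_positive_functional[where \<Lambda> = "\<lambda>f. orbit_integral f t", OF orbit_integral_lincomb[OF assms(1)]
      lincomb_Lp orbit_integral_nonneg[OF assms(1)] one_Lp assms(2,3)]
  unfolding orbit_integral_one[OF assms(1)] .

lemma orbit_integral_P:
  assumes s: "s \<ge> 0" and t: "t \<ge> 0" and f: "f \<in> Lp M p"
  shows "orbit_integral (P s f) t = orbit_integral f (t + s)"
  unfolding orbit_integral_def
  using P_add[OF t s f] s t f by (intro integral_cong_AE P_measurable P_Lp) auto

definition laplace_integral :: "real \<Rightarrow> ('a \<Rightarrow> real) \<Rightarrow> real \<Rightarrow> real" where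
  "laplace_integral \<alpha> f T = (LINT t:{0..T}|lborel. exp (- \<alpha> * t) * orbit_integral f t)"

lemma resolvent_Lp: "\<alpha> > 0 \<Longrightarrow> f \<in> Lp M p \<Longrightarrow> R \<alpha> f \<in> Lp M p"
  using resolvent unfolding is_resolvent_def by auto

text \<open>Testing the partial resolvents against \<open>h = 1\<close> identifies their integrals with
  \<open>laplace_integral\<close>.\<close>

lemma partial_resolvent_approx:
  assumes "\<alpha> > 0" "f \<in> Lp M p" "\<epsilon> > 0"
  obtains T0 where "\<And>T. T \<ge> T0 \<Longrightarrow> \<exists>g. g \<in> Lp M p \<and> (\<integral>x. g x \<partial>M) = laplace_integral \<alpha> f T \<and>
      set_integrable lborel {0..T} (\<lambda>t. exp (- \<alpha> * t) * orbit_integral f t) \<and>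
      Lp_norm M p (\<lambda>x. R \<alpha> f x - g x) < \<epsilon>"
proof -
  obtain T0 where T0: "\<And>T. T \<ge> T0 \<Longrightarrow> \<exists>g. partial_resolvent M p P \<alpha> T f g \<and> Lp_norm M p (\<lambda>x. R \<alpha> f x - g x) < \<epsilon>"
    using resolvent assms unfolding is_resolvent_def by blast
  show ?thesis
  proof (rule that)
    fix T assume "T \<ge> T0"
    then obtain g where g: "partial_resolvent M p P \<alpha> T f g" "Lp_norm M p (\<lambda>x. R \<alpha> f x - g x) < \<epsilon>"
      using T0 by blast
    from bspec[OF g(1)[unfolded partial_resolvent_def, THEN conjunct2] Linfty_const[of 1]] g
    show "\<exists>g. g \<in> Lp M p \<and> (\<integral>x. g x \<partial>M) = laplace_integral \<alpha> f T \<and>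
        set_integrable lborel {0..T} (\<lambda>t. exp (- \<alpha> * t) * orbit_integral f t) \<and>
        Lp_norm M p (\<lambda>x. R \<alpha> f x - g x) < \<epsilon>"
      by (auto simp: laplace_integral_def orbit_integral_def partial_resolvent_def)
  qed
qed

lemma laplace_integrable:
  assumes "\<alpha> > 0" "f \<in> Lp M p"
  shows "set_integrable lborel {0..T} (\<lambda>t. exp (- \<alpha> * t) * orbit_integral f t)"
proof -
  obtain T0 where T0: "\<And>T. T \<ge> T0 \<Longrightarrow> \<exists>g. g \<in> Lp M p \<and> (\<integral>x. g x \<partial>M) = laplace_integral \<alpha> f T \<and>
      set_integrable lborel {0..T} (\<lambda>t. exp (- \<alpha> * t) * orbit_integral f t) \<and>
      Lp_norm M p (\<lambda>x. R \<alpha> f x - g x) < 1"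
    using partial_resolvent_approx[OF assms zero_less_one] by blast
  obtain g where "set_integrable lborel {0..max T T0} (\<lambda>t. exp (- \<alpha> * t) * orbit_integral f t)"
    using T0[of "max T T0"] by auto
  then show ?thesis by (rule set_integrable_subset) auto
qed

lemma laplace_integral_lincomb:
  assumes "\<alpha> > 0" "f \<in> Lp M p" "g \<in> Lp M p"
  shows "laplace_integral \<alpha> (\<lambda>y. a * f y + b * g y) T = a * laplace_integral \<alpha> f T + b * laplace_integral \<alpha> g T"
proof -
  have "laplace_integral \<alpha> (\<lambda>y. a * f y + b * g y) T =
      (LINT t:{0..T}|lborel. a * (exp (- \<alpha> * t) * orbit_integral f t) + b * (exp (- \<alpha> * t) * orbit_integral g t))"
    unfolding laplace_integral_def using assms
    by (intro set_lebesgue_integral_cong) (auto simp: orbit_integral_lincomb algebra_simps)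
  also have "\<dots> = a * laplace_integral \<alpha> f T + b * laplace_integral \<alpha> g T"
    using laplace_integrable[OF assms(1,2)] laplace_integrable[OF assms(1,3)]
    by (simp add: set_integral_add laplace_integral_def)
  finally show ?thesis .
qed

lemma laplace_integral_nonneg:
  "\<alpha> > 0 \<Longrightarrow> f \<in> Lp M p \<Longrightarrow> AE x in M. 0 \<le> f x \<Longrightarrow> laplace_integral \<alpha> f T \<ge> 0"
  unfolding laplace_integral_def set_lebesgue_integral_def
  by (intro integral_nonneg_AE AE_I2) (auto simp: orbit_integral_nonneg split: split_indicator)

lemma laplace_integral_one:
  assumes "\<alpha> > 0" "T \<ge> 0"
  shows "\<alpha> * laplace_integral \<alpha> (\<lambda>_. 1) T = total_mass * (1 - exp (- \<alpha> * T))"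
proof -
  have "laplace_integral \<alpha> (\<lambda>_. 1) T = total_mass * (LINT t:{0..T}|lborel. exp (- \<alpha> * t))"
    unfolding laplace_integral_def
    by (subst set_lebesgue_integral_cong[where g = "\<lambda>t. total_mass * exp (- \<alpha> * t)"])
       (auto simp: orbit_integral_one)
  also have "(LINT t:{0..T}|lborel. exp (- \<alpha> * t)) = - exp (- \<alpha> * T) / \<alpha> - (- exp (- \<alpha> * 0) / \<alpha>)"
    unfolding set_lebesgue_integral_def
  proof (rule integral_FTC_atLeastAtMost[OF assms(2)])
    fix x
    have "((\<lambda>t. - exp (- \<alpha> * t) / \<alpha>) has_real_derivative exp (- \<alpha> * x)) (at x within {0..T})"
      using assms by (auto intro!: derivative_eq_intros simp: field_simps)
    then show "((\<lambda>t. - exp (- \<alpha> * t) / \<alpha>) has_vector_derivative exp (- \<alpha> * x)) (at x within {0..T})"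
      by (simp add: has_real_derivative_iff_has_vector_derivative)
  qed (intro continuous_intros)
  finally show ?thesis using assms by (simp add: field_simps)
qed

lemma laplace_integral_abs_le:
  assumes "\<alpha> > 0" "s \<ge> 0" "f \<in> Lp M p" "AE x in M. \<bar>f x\<bar> \<le> K"
  shows "\<bar>laplace_integral \<alpha> f s\<bar> \<le> K * total_mass * s"
proof -
  have int: "integrable lborel (\<lambda>t. indicator {0..s} t *\<^sub>R (exp (- \<alpha> * t) * orbit_integral f t))"
    using laplace_integrable[OF assms(1,3)] unfolding set_integrable_def .
  have "\<bar>laplace_integral \<alpha> f s\<bar> \<le> (\<integral>t. \<bar>indicator {0..s} t *\<^sub>R (exp (- \<alpha> * t) * orbit_integral f t)\<bar> \<partial>lborel)"
    unfolding laplace_integral_def set_lebesgue_integral_def by (rule integral_abs_bound)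
  also have "\<dots> \<le> (\<integral>t. indicator {0..s} t * (K * total_mass) \<partial>lborel)"
  proof (rule integral_mono[OF integrable_abs[OF int]])
    show "integrable lborel (\<lambda>t. indicator {0..s} t * (K * total_mass))"
      using assms by (intro integrable_mult_left integrable_real_indicator) auto
    fix t
    show "\<bar>indicator {0..s} t *\<^sub>R (exp (- \<alpha> * t) * orbit_integral f t)\<bar> \<le> indicator {0..s} t * (K * total_mass)"
    proof (cases "t \<in> {0..s}")
      case True
      have "exp (- \<alpha> * t) * \<bar>orbit_integral f t\<bar> \<le> 1 * (K * total_mass)"
        using True assms orbit_integral_abs_le[OF _ assms(3,4), of t] by (intro mult_mono) auto
      with True show ?thesis by (simp add: abs_mult)
    qed simp
  qed
  also have "\<dots> = K * total_mass * s" using assms by simp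
  finally show ?thesis .
qed

lemma laplace_integral_P:
  assumes "\<alpha> > 0" "s \<ge> 0" "T \<ge> 0" "f \<in> Lp M p"
  shows "laplace_integral \<alpha> (P s f) T = exp (\<alpha> * s) * (laplace_integral \<alpha> f (T + s) - laplace_integral \<alpha> f s)"
proof -
  define g where "g u = exp (- \<alpha> * u) * orbit_integral f u" for u
  have "laplace_integral \<alpha> (P s f) T = (LINT t:{0..T}|lborel. exp (\<alpha> * s) * g (t + s))"
    unfolding laplace_integral_def g_def using assms
    by (intro set_lebesgue_integral_cong)
       (auto simp: orbit_integral_P mult.assoc[symmetric] exp_add[symmetric] algebra_simps)
  also have "\<dots> = exp (\<alpha> * s) * (LINT t:{0..T}|lborel. g (t + s))" by simp
  also have "(LINT t:{0..T}|lborel. g (t + s)) = (\<integral>u. indicator {s..T+s} u * g u \<partial>lborel)"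
    using lborel_integral_real_affine[where f = "\<lambda>u. indicator {s..T+s} u * g u" and c = 1 and t = s]
    by (simp add: set_lebesgue_integral_def indicator_def add.commute)
  also have "\<dots> = laplace_integral \<alpha> f (T + s) - laplace_integral \<alpha> f s"
  proof -
    have int: "set_integrable lborel {0..T+s} g" using laplace_integrable[OF assms(1,4)] unfolding g_def .
    have int1: "integrable lborel (\<lambda>u. indicator {0..s} u * g u)"
      using set_integrable_subset[OF int, of "{0..s}"] assms unfolding set_integrable_def by auto
    have int2: "integrable lborel (\<lambda>u. indicator {s..T+s} u * g u)"
      using set_integrable_subset[OF int, of "{s..T+s}"] assms unfolding set_integrable_def by auto
    have "laplace_integral \<alpha> f (T + s) = (\<integral>u. indicator {0..s} u * g u + indicator {s..T+s} u * g u \<partial>lborel)"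
      unfolding laplace_integral_def set_lebesgue_integral_def g_def[symmetric]
      using int1 int2 AE_lborel_singleton[of s] assms int[unfolded set_integrable_def]
      by (intro integral_cong_AE borel_measurable_integrable) (auto elim!: eventually_mono simp: indicator_def)
    moreover have "laplace_integral \<alpha> f s = (\<integral>u. indicator {0..s} u * g u \<partial>lborel)"
      by (simp add: laplace_integral_def set_lebesgue_integral_def g_def)
    ultimately show ?thesis using int1 int2 by simp
  qed
  finally show ?thesis .
qed

definition resolvent_functional :: "real \<Rightarrow> ('a \<Rightarrow> real) \<Rightarrow> real" where
  "resolvent_functional \<alpha> f = (\<integral>x. \<alpha> * R \<alpha> f x \<partial>M)"

lemma tendsto_laplace_integral:
  assumes "\<alpha> > 0" "f \<in> Lp M p"
  shows "((\<lambda>T. \<alpha> * laplace_integral \<alpha> f T) \<longlongrightarrow> resolvent_functional \<alpha> f) at_top"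
proof (rule tendstoI)
  fix \<epsilon> :: real assume "\<epsilon> > 0"
  define c where "c = \<alpha> * total_mass powr (1 - 1/p)"
  have "c > 0" using assms total_mass_pos by (simp add: c_def)
  obtain T0 where T0: "\<And>T. T \<ge> T0 \<Longrightarrow> \<exists>g. g \<in> Lp M p \<and> (\<integral>x. g x \<partial>M) = laplace_integral \<alpha> f T \<and>
      set_integrable lborel {0..T} (\<lambda>t. exp (- \<alpha> * t) * orbit_integral f t) \<and>
      Lp_norm M p (\<lambda>x. R \<alpha> f x - g x) < \<epsilon> / c"
    using partial_resolvent_approx[OF assms divide_pos_pos[OF \<open>\<epsilon> > 0\<close> \<open>c > 0\<close>]] by blast
  have "dist (\<alpha> * laplace_integral \<alpha> f T) (resolvent_functional \<alpha> f) < \<epsilon>" if T: "T \<ge> T0" for T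
  proof -
    obtain g where g: "g \<in> Lp M p" "(\<integral>x. g x \<partial>M) = laplace_integral \<alpha> f T"
      and close: "Lp_norm M p (\<lambda>x. R \<alpha> f x - g x) < \<epsilon> / c"
      using T0[OF T] by blast
    have R: "R \<alpha> f \<in> Lp M p" by (rule resolvent_Lp[OF assms])
    have "(\<integral>x. R \<alpha> f x - g x \<partial>M) = (\<integral>x. R \<alpha> f x \<partial>M) - laplace_integral \<alpha> f T"
      using Lp_integrable[OF R p_ge_1] Lp_integrable[OF g(1) p_ge_1] g(2) by simp
    then have "dist (\<alpha> * laplace_integral \<alpha> f T) (resolvent_functional \<alpha> f) = \<bar>\<alpha>\<bar> * \<bar>\<integral>x. R \<alpha> f x - g x \<partial>M\<bar>"
      unfolding dist_real_def resolvent_functional_def abs_mult[symmetric]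
      by (simp add: right_diff_distrib abs_minus_commute)
    also have "\<dots> \<le> \<alpha> * (\<integral>x. \<bar>R \<alpha> f x - g x\<bar> \<partial>M)"
      using assms integral_abs_bound[of M "\<lambda>x. R \<alpha> f x - g x"] by (simp add: mult_left_mono)
    also have "\<dots> \<le> c * Lp_norm M p (\<lambda>x. R \<alpha> f x - g x)"
      using assms integral_abs_le_Lp_norm[OF Lp_diff[OF R g(1)] p_ge_1] p_ge_1
      by (simp add: c_def mult.assoc)
    also have "\<dots> < \<epsilon>" using close \<open>c > 0\<close> by (simp add: field_simps)
    finally show ?thesis .
  qed
  then show "eventually (\<lambda>T. dist (\<alpha> * laplace_integral \<alpha> f T) (resolvent_functional \<alpha> f) < \<epsilon>) at_top"
    unfolding eventually_at_top_linorder by blast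
qed

lemma resolvent_functional_eqI:
  "\<alpha> > 0 \<Longrightarrow> f \<in> Lp M p \<Longrightarrow> ((\<lambda>T. \<alpha> * laplace_integral \<alpha> f T) \<longlongrightarrow> l) at_top \<Longrightarrow>
    resolvent_functional \<alpha> f = l"
  using tendsto_unique[OF trivial_limit_at_top_linorder tendsto_laplace_integral] by blast

lemma resolvent_functional_lincomb:
  assumes "\<alpha> > 0" "f \<in> Lp M p" "g \<in> Lp M p"
  shows "resolvent_functional \<alpha> (\<lambda>y. a * f y + b * g y) = a * resolvent_functional \<alpha> f + b * resolvent_functional \<alpha> g"
proof (rule resolvent_functional_eqI[OF assms(1) lincomb_Lp[OF assms(2,3)]])
  have "((\<lambda>T. a * (\<alpha> * laplace_integral \<alpha> f T) + b * (\<alpha> * laplace_integral \<alpha> g T))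
      \<longlongrightarrow> a * resolvent_functional \<alpha> f + b * resolvent_functional \<alpha> g) at_top"
    using assms by (intro tendsto_intros tendsto_laplace_integral)
  then show "((\<lambda>T. \<alpha> * laplace_integral \<alpha> (\<lambda>y. a * f y + b * g y) T)
      \<longlongrightarrow> a * resolvent_functional \<alpha> f + b * resolvent_functional \<alpha> g) at_top"
    by (simp add: laplace_integral_lincomb[OF assms] algebra_simps)
qed

lemma resolvent_functional_nonneg:
  assumes "\<alpha> > 0" "f \<in> Lp M p" "AE x in M. 0 \<le> f x"
  shows "resolvent_functional \<alpha> f \<ge> 0"
  using assms laplace_integral_nonneg[OF assms]
  by (intro tendsto_lowerbound[OF tendsto_laplace_integral[OF assms(1,2)]] always_eventually) auto

lemma resolvent_functional_one:
  assumes "\<alpha> > 0"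
  shows "resolvent_functional \<alpha> (\<lambda>_. 1) = total_mass"
proof (rule resolvent_functional_eqI[OF assms one_Lp])
  have "((\<lambda>T. total_mass * (1 - exp (- \<alpha> * T))) \<longlongrightarrow> total_mass) at_top"
    using assms by real_asymp
  moreover have "eventually (\<lambda>T. total_mass * (1 - exp (- \<alpha> * T)) = \<alpha> * laplace_integral \<alpha> (\<lambda>_. 1) T) at_top"
    using eventually_ge_at_top[of 0] by eventually_elim (simp add: laplace_integral_one[OF assms])
  ultimately show "((\<lambda>T. \<alpha> * laplace_integral \<alpha> (\<lambda>_. 1) T) \<longlongrightarrow> total_mass) at_top"
    by (rule Lim_transform_eventually)
qed

lemma resolvent_functional_abs_le:
  assumes "\<alpha> > 0" "f \<in> Lp M p" "AE x in M. \<bar>f x\<bar> \<le> K"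
  shows "\<bar>resolvent_functional \<alpha> f\<bar> \<le> K * total_mass"
  using abs_le_of_positive_functional[where \<Lambda> = "resolvent_functional \<alpha>",
      OF resolvent_functional_lincomb[OF assms(1)] lincomb_Lp
      resolvent_functional_nonneg[OF assms(1)] one_Lp assms(2,3)]
  unfolding resolvent_functional_one[OF assms(1)] .

definition resolvent_bound :: real where
  "resolvent_bound = (SOME C. \<forall>\<alpha>>0. \<forall>f\<in>Lp M p. Lp_norm M p (\<lambda>x. \<alpha> * R \<alpha> f x) \<le> C * Lp_norm M p f)"

definition domination_constant :: real where
  "domination_constant = total_mass powr (1 - 1/p) * max resolvent_bound 0"

lemma domination_constant_nonneg: "domination_constant \<ge> 0"
  by (simp add: domination_constant_def)

lemma resolvent_functional_le_Lp_norm: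
  assumes "\<alpha> > 0" "f \<in> Lp M p"
  shows "resolvent_functional \<alpha> f \<le> domination_constant * Lp_norm M p f"
proof -
  have R: "(\<lambda>x. \<alpha> * R \<alpha> f x) \<in> Lp M p" by (rule Lp_cmult[OF resolvent_Lp[OF assms]])
  have "resolvent_functional \<alpha> f \<le> (\<integral>x. \<bar>\<alpha> * R \<alpha> f x\<bar> \<partial>M)"
    unfolding resolvent_functional_def by (rule order_trans[OF abs_ge_self integral_abs_bound])
  also have "\<dots> \<le> total_mass powr (1 - 1/p) * Lp_norm M p (\<lambda>x. \<alpha> * R \<alpha> f x)"
    by (rule integral_abs_le_Lp_norm[OF R p_ge_1])
  also have "Lp_norm M p (\<lambda>x. \<alpha> * R \<alpha> f x) \<le> resolvent_bound * Lp_norm M p f"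
    using someI_ex[OF resolvent_bounded] assms unfolding resolvent_bound_def by blast
  also have "\<dots> \<le> max resolvent_bound 0 * Lp_norm M p f"
    by (intro mult_right_mono Lp_norm_nonneg) auto
  finally show ?thesis
    by (simp add: domination_constant_def mult.assoc mult_left_mono)
qed

lemma resolvent_functional_P:
  assumes "\<alpha> > 0" "s \<ge> 0" "f \<in> Lp M p"
  shows "resolvent_functional \<alpha> (P s f)
    = exp (\<alpha> * s) * (resolvent_functional \<alpha> f - \<alpha> * laplace_integral \<alpha> f s)"
proof (rule resolvent_functional_eqI[OF assms(1) P_Lp[OF assms(2,3)]])
  have "filterlim (\<lambda>T. T + s) at_top at_top"
    by (subst add.commute) (rule filterlim_tendsto_add_at_top[OF tendsto_const filterlim_ident])
  then have "((\<lambda>T. \<alpha> * laplace_integral \<alpha> f (T + s)) \<longlongrightarrow> resolvent_functional \<alpha> f) at_top"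
    using filterlim_compose[OF tendsto_laplace_integral[OF assms(1,3)]] by blast
  then have "((\<lambda>T. exp (\<alpha> * s) * (\<alpha> * laplace_integral \<alpha> f (T + s) - \<alpha> * laplace_integral \<alpha> f s))
      \<longlongrightarrow> exp (\<alpha> * s) * (resolvent_functional \<alpha> f - \<alpha> * laplace_integral \<alpha> f s)) at_top"
    by (intro tendsto_intros)
  moreover have "eventually (\<lambda>T. exp (\<alpha> * s) * (\<alpha> * laplace_integral \<alpha> f (T + s) - \<alpha> * laplace_integral \<alpha> f s)
      = \<alpha> * laplace_integral \<alpha> (P s f) T) at_top"
    using eventually_ge_at_top[of 0]
    by eventually_elim (simp add: laplace_integral_P[OF assms(1,2) _ assms(3)] algebra_simps)
  ultimately show "((\<lambda>T. \<alpha> * laplace_integral \<alpha> (P s f) T)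
      \<longlongrightarrow> exp (\<alpha> * s) * (resolvent_functional \<alpha> f - \<alpha> * laplace_integral \<alpha> f s)) at_top"
    by (rule Lim_transform_eventually)
qed

lemma resolvent_functional_P_approx:
  assumes s: "s \<ge> 0" and f: "f \<in> Linfty M" and "\<epsilon> > 0"
  shows "eventually (\<lambda>\<alpha>. \<bar>resolvent_functional \<alpha> (P s f) - resolvent_functional \<alpha> f\<bar> \<le> \<epsilon>) (at_right 0)"
proof -
  obtain K where "AE x in M. \<bar>f x\<bar> \<le> K" using f by (auto simp: Linfty_def)
  then have K: "AE x in M. \<bar>f x\<bar> \<le> \<bar>K\<bar>" by eventually_elim auto
  have fL: "f \<in> Lp M p" using Linfty_Lp[OF f] p_ge_1 by simp
  define B where "B = \<bar>K\<bar> * total_mass"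
  define h where "h \<alpha> = (exp (\<alpha> * s) - 1) * B + exp (\<alpha> * s) * \<alpha> * (B * s)" for \<alpha>
  have "(h \<longlongrightarrow> h 0) (at_right 0)" unfolding h_def by (intro tendsto_intros)
  moreover have "h 0 < \<epsilon>" using \<open>\<epsilon> > 0\<close> by (simp add: h_def)
  ultimately have "eventually (\<lambda>\<alpha>. h \<alpha> < \<epsilon>) (at_right 0)" by (rule order_tendstoD)
  with eventually_at_right_less[of 0] show ?thesis
  proof eventually_elim
    case (elim \<alpha>)
    have "resolvent_functional \<alpha> (P s f) - resolvent_functional \<alpha> f
        = (exp (\<alpha> * s) - 1) * resolvent_functional \<alpha> f - exp (\<alpha> * s) * \<alpha> * laplace_integral \<alpha> f s"
      using elim by (simp add: resolvent_functional_P[OF _ s fL] algebra_simps)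
    then have "\<bar>resolvent_functional \<alpha> (P s f) - resolvent_functional \<alpha> f\<bar>
        \<le> \<bar>(exp (\<alpha> * s) - 1) * resolvent_functional \<alpha> f\<bar> + \<bar>exp (\<alpha> * s) * \<alpha> * laplace_integral \<alpha> f s\<bar>"
      by (simp add: abs_triangle_ineq4)
    also have "\<bar>(exp (\<alpha> * s) - 1) * resolvent_functional \<alpha> f\<bar> \<le> (exp (\<alpha> * s) - 1) * B"
      using elim s resolvent_functional_abs_le[OF _ fL K, of \<alpha>]
      by (simp add: abs_mult B_def mult_left_mono)
    also have "\<bar>exp (\<alpha> * s) * \<alpha> * laplace_integral \<alpha> f s\<bar> \<le> exp (\<alpha> * s) * \<alpha> * (B * s)"
      using elim laplace_integral_abs_le[OF _ s fL K, of \<alpha>]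
      by (simp add: abs_mult B_def mult_left_mono)
    finally show ?case using elim by (simp add: h_def)
  qed
qed

text \<open>A cluster point, as \<open>\<alpha> \<rightarrow> 0\<^sup>+\<close>, of the functionals \<open>f \<mapsto> \<integral> \<alpha> R\<^sub>\<alpha> f dm\<close> on \<open>L\<^sup>\<infinity>\<close>
  (extended by \<open>0\<close> off \<open>L\<^sup>\<infinity>\<close>).\<close>

definition limit_functional :: "('a \<Rightarrow> real) \<Rightarrow> real" where
  "limit_functional = (SOME L. \<forall>Q. closed (Collect Q) \<longrightarrow>
     eventually (\<lambda>\<alpha>. Q (\<lambda>f. if f \<in> Linfty M then resolvent_functional \<alpha> f else 0)) (at_right 0) \<longrightarrow> Q L)"

lemma limit_functional_closed:
  assumes "closed (Collect Q)"
    and "eventually (\<lambda>\<alpha>. Q (\<lambda>f. if f \<in> Linfty M then resolvent_functional \<alpha> f else 0)) (at_right 0)"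
  shows "Q limit_functional"
proof -
  define B where "B f = (if f \<in> Linfty M then \<bar>SOME K. AE x in M. \<bar>f x\<bar> \<le> K\<bar> * total_mass else 0)" for f
  have bounded: "\<bar>if f \<in> Linfty M then resolvent_functional \<alpha> f else 0\<bar> \<le> B f" if "\<alpha> > 0" for \<alpha> f
  proof (cases "f \<in> Linfty M")
    case True
    have "\<exists>K. AE x in M. \<bar>f x\<bar> \<le> K" using True by (auto simp: Linfty_def)
    from someI_ex[OF this] have "AE x in M. \<bar>f x\<bar> \<le> \<bar>SOME K. AE x in M. \<bar>f x\<bar> \<le> K\<bar>"
      by eventually_elim auto
    with resolvent_functional_abs_le[OF that] Linfty_Lp[OF True] p_ge_1 True
    show ?thesis by (simp add: B_def)
  qed (simp add: B_def)
  have "eventually (\<lambda>\<alpha>. \<forall>f. \<bar>if f \<in> Linfty M then resolvent_functional \<alpha> f else 0\<bar> \<le> B f) (at_right 0)"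
    using eventually_at_right_less[of 0] by eventually_elim (simp add: bounded)
  then have "\<exists>L. \<forall>Q. closed (Collect Q) \<longrightarrow>
      eventually (\<lambda>\<alpha>. Q (\<lambda>f. if f \<in> Linfty M then resolvent_functional \<alpha> f else 0)) (at_right 0) \<longrightarrow> Q L"
    by (rule pointwise_bounded_cluster_point[rotated]) simp
  then have "\<forall>Q. closed (Collect Q) \<longrightarrow>
      eventually (\<lambda>\<alpha>. Q (\<lambda>f. if f \<in> Linfty M then resolvent_functional \<alpha> f else 0)) (at_right 0) \<longrightarrow>
      Q limit_functional"
    unfolding limit_functional_def by (rule someI_ex)
  with assms show ?thesis by blast
qed

lemma limit_functional_lincomb:
  assumes f: "f \<in> Linfty M" and g: "g \<in> Linfty M"
  shows "limit_functional (\<lambda>x. a * f x + b * g x) = a * limit_functional f + b * limit_functional g"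
proof (rule limit_functional_closed[where Q = "\<lambda>L. L (\<lambda>x. a * f x + b * g x) = a * L f + b * L g"])
  show "closed {L. L (\<lambda>x. a * f x + b * g x) = a * L f + b * L g}"
    by (intro closed_Collect_eq continuous_intros continuous_on_product_coordinates)
  have lincomb: "resolvent_functional \<alpha> (\<lambda>x. a * f x + b * g x) = a * resolvent_functional \<alpha> f + b * resolvent_functional \<alpha> g"
    if "\<alpha> > 0" for \<alpha>
    using Linfty_Lp[OF f] Linfty_Lp[OF g] p_ge_1 by (intro resolvent_functional_lincomb that) auto
  show "eventually (\<lambda>\<alpha>. (\<lambda>f. if f \<in> Linfty M then resolvent_functional \<alpha> f else 0) (\<lambda>x. a * f x + b * g x)
      = a * (\<lambda>f. if f \<in> Linfty M then resolvent_functional \<alpha> f else 0) f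
        + b * (\<lambda>f. if f \<in> Linfty M then resolvent_functional \<alpha> f else 0) g) (at_right 0)"
    using eventually_at_right_less[of 0] by eventually_elim (simp add: f g Linfty_lincomb[OF f g] lincomb)
qed

lemma limit_functional_nonneg:
  assumes f: "f \<in> Linfty M" and "AE x in M. 0 \<le> f x"
  shows "0 \<le> limit_functional f"
proof (rule limit_functional_closed[where Q = "\<lambda>L. 0 \<le> L f"])
  show "closed {L. 0 \<le> (L f :: real)}"
    by (intro closed_Collect_le continuous_on_const continuous_on_product_coordinates)
  show "eventually (\<lambda>\<alpha>. 0 \<le> (\<lambda>f. if f \<in> Linfty M then resolvent_functional \<alpha> f else 0) f) (at_right 0)"
    using eventually_at_right_less[of 0]
    by eventually_elim (use Linfty_Lp[OF f] p_ge_1 in \<open>simp add: f resolvent_functional_nonneg assms(2)\<close>)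
qed

lemma limit_functional_one: "limit_functional (\<lambda>_. 1) = total_mass"
proof (rule limit_functional_closed[where Q = "\<lambda>L. L (\<lambda>_. 1) = total_mass"])
  show "closed {L. L (\<lambda>_. 1) = total_mass}"
    by (intro closed_Collect_eq continuous_on_product_coordinates continuous_on_const)
  show "eventually (\<lambda>\<alpha>. (\<lambda>f. if f \<in> Linfty M then resolvent_functional \<alpha> f else 0) (\<lambda>_. 1) = total_mass) (at_right 0)"
    using eventually_at_right_less[of 0] by eventually_elim (simp add: Linfty_const resolvent_functional_one)
qed

lemma limit_functional_dominated:
  assumes f: "f \<in> Linfty M"
  shows "limit_functional f \<le> domination_constant * Lp_norm M p f"
proof (rule limit_functional_closed[where Q = "\<lambda>L. L f \<le> domination_constant * Lp_norm M p f"])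
  show "closed {L. L f \<le> domination_constant * Lp_norm M p f}"
    by (intro closed_Collect_le continuous_on_product_coordinates continuous_on_const)
  show "eventually (\<lambda>\<alpha>. (\<lambda>f. if f \<in> Linfty M then resolvent_functional \<alpha> f else 0) f
      \<le> domination_constant * Lp_norm M p f) (at_right 0)"
    using eventually_at_right_less[of 0]
    by eventually_elim (use Linfty_Lp[OF f] p_ge_1 in \<open>simp add: f resolvent_functional_le_Lp_norm\<close>)
qed

lemma limit_functional_P:
  assumes s: "s \<ge> 0" and f: "f \<in> Linfty M"
  shows "limit_functional (P s f) = limit_functional f"
proof -
  have Pf: "P s f \<in> Linfty M" by (rule P_Linfty[OF s f])
  have "\<bar>limit_functional (P s f) - limit_functional f\<bar> \<le> 0 + \<epsilon>" if "\<epsilon> > 0" for \<epsilon>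
  proof (rule limit_functional_closed[where Q = "\<lambda>L. \<bar>L (P s f) - L f\<bar> \<le> 0 + \<epsilon>"])
    show "closed {L. \<bar>L (P s f) - L f\<bar> \<le> 0 + \<epsilon>}"
      by (intro closed_Collect_le continuous_intros continuous_on_product_coordinates)
    show "eventually (\<lambda>\<alpha>. \<bar>(\<lambda>f. if f \<in> Linfty M then resolvent_functional \<alpha> f else 0) (P s f)
        - (\<lambda>f. if f \<in> Linfty M then resolvent_functional \<alpha> f else 0) f\<bar> \<le> 0 + \<epsilon>) (at_right 0)"
      using resolvent_functional_P_approx[OF s f that] by (simp add: f Pf)
  qed
  then have "\<bar>limit_functional (P s f) - limit_functional f\<bar> \<le> 0" by (rule field_le_epsilon)
  then show ?thesis by simp
qed

sublocale limit: Lp_dominated_functional M p limit_functional domination_constant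
  using p_ge_1 limit_functional_lincomb limit_functional_nonneg limit_functional_dominated
  by unfold_locales

lemma resolvent_almost_invariant: "resolvent_almost_invariant M R"
proof (rule resolvent_almost_invariantI_powr[OF _ domination_constant_nonneg])
  show "p > 0" using p_ge_1 by simp
  show "(\<integral>x. \<alpha> * R \<alpha> (indicator A) x \<partial>M) \<le> domination_constant * measure M A powr (1/p)"
    if "A \<in> sets M" "\<alpha> > 0" for A \<alpha>
    using resolvent_functional_le_Lp_norm[OF that(2) Linfty_Lp[OF Linfty_indicator[OF that(1)]]] p_ge_1
    by (simp add: resolvent_functional_def Lp_norm_indicator[OF that(1)])
qed

end

theorem theorem3p20:
  fixes M :: "'a measure" and p :: real
    and P R :: "real \<Rightarrow> ('a \<Rightarrow> real) \<Rightarrow> ('a \<Rightarrow> real)"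
  assumes "finite_measure M"
    and "emeasure M (space M) > 0"
    and "p \<ge> 1"
    and "markov_C0_semigroup M p P"
    and "\<forall>\<alpha>>0. \<forall>f\<in>Lp M p. is_resolvent M p P \<alpha> f (R \<alpha> f)"
    and "\<exists>C. \<forall>\<alpha>>0. \<forall>f\<in>Lp M p. Lp_norm M p (\<lambda>x. \<alpha> * R \<alpha> f x) \<le> C * Lp_norm M p f"
  shows "resolvent_almost_invariant M R \<and>
    (\<exists>\<rho>. \<rho> \<in> borel_measurable M \<and> (\<forall>x\<in>space M. 0 \<le> \<rho> x) \<and>
       emeasure (density M (\<lambda>x. ennreal (\<rho> x))) (space M) \<noteq> 0 \<and>
       emeasure (density M (\<lambda>x. ennreal (\<rho> x))) (space M) < \<infinity> \<and>
       invariant_measure M P (density M (\<lambda>x. ennreal (\<rho> x))) \<and>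
       (p > 1 \<longrightarrow> \<rho> \<in> Lp M (p / (p - 1))))"
proof -
  interpret markov_resolvent M p P R
    using assms by (intro markov_resolvent.intro markov_resolvent_axioms.intro)
  obtain \<rho> where \<rho>: "\<rho> \<in> borel_measurable M" "\<And>x. 0 \<le> \<rho> x"
    and \<nu>: "density M (\<lambda>x. ennreal (\<rho> x)) = limit.representing_measure"
    and Lq: "p > 1 \<Longrightarrow> \<rho> \<in> Lp M (p / (p - 1))"
    using limit.density_representation by blast
  have "emeasure limit.representing_measure (space M) = ennreal total_mass"
    by (simp add: limit.emeasure_representing_measure_space limit_functional_one)
  moreover have "invariant_measure M P limit.representing_measure"
    unfolding invariant_measure_def
    by (simp add: limit.integral_representing_measure P_Linfty limit_functional_P)
  ultimately show ?thesis
    using resolvent_almost_invariant \<rho> \<nu> Lq total_mass_pos by auto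
qed

end
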